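(* Let $p\ge5$ be prime and $f$ a modular form of weight $k$ on $\mathrm{SL}_2(\mathbb{Z})$ with integer Fourier coefficients. Then $D^{p^2}f$ is a modular form mod $p^2$; that is, the image of $D^{p^2}f\in\mathbb{Z}_{(p)}[P,Q,R]$ in $(\mathbb{Z}/p^2\mathbb{Z})[P,Q,R]$ lies in $(\mathbb{Z}/p^2\mathbb{Z})[Q,R]$.
   Context: $\mathbb{Z}_{(p)}$ is the localization of $\mathbb{Z}$ at $p$. $P=E_2,Q=E_4,R=E_6$ are the normalized Eisenstein series; quasimodular forms are identified with their unique polynomial expressions in $P,Q,R$, so $f\in\mathbb{Z}_{(p)}[Q,R]$. $D=q\frac{d}{dq}$ acts on $\mathbb{Z}_{(p)}[P,Q,R]$ as the derivation with $DP=\frac{P^2-Q}{12}$, $DQ=\frac{PQ-R}{3}$, $DR=\frac{PR-Q^2}{2}$. *)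

theory Defs
  imports "HOL-Computational_Algebra.Computational_Algebra"
begin

text \<open>Polynomials in P, Q, R over the rationals, represented as nested univariate
  polynomials: the outer variable is R, the middle one Q, the inner one P.
  The coefficient of P^a Q^b R^c in f is coeff (coeff (coeff f c) b) a.\<close>

type_synonym pqr = "rat poly poly poly"

definition varP :: pqr where "varP = [:[:[:0, 1:]:]:]"
definition varQ :: pqr where "varQ = [:[:0, 1:]:]"
definition varR :: pqr where "varR = [:0, 1:]"
definition cst :: "rat \<Rightarrow> pqr" where "cst r = [:[:[:r:]:]:]"

definition coeffPQR :: "pqr \<Rightarrow> nat \<Rightarrow> nat \<Rightarrow> nat \<Rightarrow> rat" where
  "coeffPQR f a b c = coeff (coeff (coeff f c) b) a"

definition dP :: "pqr \<Rightarrow> pqr" where "dP f = map_poly (map_poly pderiv) f"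
definition dQ :: "pqr \<Rightarrow> pqr" where "dQ f = map_poly pderiv f"
definition dR :: "pqr \<Rightarrow> pqr" where "dR f = pderiv f"

text \<open>The Ramanujan derivation D = q d/dq on polynomials in P, Q, R.\<close>
definition Dop :: "pqr \<Rightarrow> pqr" where
  "Dop f = cst (1/12) * (varP^2 - varQ) * dP f
         + cst (1/3) * (varP * varQ - varR) * dQ f
         + cst (1/2) * (varP * varR - varQ^2) * dR f"

definition in_Zp :: "nat \<Rightarrow> rat \<Rightarrow> bool" where
  "in_Zp p r \<longleftrightarrow> coprime (int p) (snd (quotient_of r))"

definition sigma :: "nat \<Rightarrow> nat \<Rightarrow> nat" where
  "sigma j n = (\<Sum>d | d dvd n. d ^ j)"

definition E2q :: "rat fps" where
  "E2q = Abs_fps (\<lambda>n. if n = 0 then 1 else - 24 * of_nat (sigma 1 n))"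
definition E4q :: "rat fps" where
  "E4q = Abs_fps (\<lambda>n. if n = 0 then 1 else 240 * of_nat (sigma 3 n))"
definition E6q :: "rat fps" where
  "E6q = Abs_fps (\<lambda>n. if n = 0 then 1 else - 504 * of_nat (sigma 5 n))"

definition qexp :: "pqr \<Rightarrow> rat fps" where
  "qexp f = poly (map_poly (\<lambda>g. poly (map_poly (\<lambda>h. poly (map_poly fps_const h) E2q) g) E4q) f) E6q"

text \<open>A modular form of weight k on SL2(Z), identified with its (isobaric) polynomial in Q, R.\<close>
definition modular_form :: "nat \<Rightarrow> pqr \<Rightarrow> bool" where
  "modular_form k f \<longleftrightarrow>
     (\<forall>a b c. coeffPQR f a b c \<noteq> 0 \<longrightarrow> a = 0 \<and> 4 * b + 6 * c = k)"

definition integral_fourier :: "pqr \<Rightarrow> bool" where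
  "integral_fourier f \<longleftrightarrow> (\<forall>n. fps_nth (qexp f) n \<in> \<int>)"

text \<open>g lies in Z_(p)[P,Q,R] and its reduction mod p^2 lies in (Z/p^2Z)[Q,R].\<close>
definition modform_mod_p2 :: "nat \<Rightarrow> pqr \<Rightarrow> bool" where
  "modform_mod_p2 p g \<longleftrightarrow>
     (\<forall>a b c. in_Zp p (coeffPQR g a b c)) \<and>
     (\<forall>a b c. a > 0 \<longrightarrow> in_Zp p (coeffPQR g a b c / of_nat (p ^ 2)))"

end

theory Submission
  imports Defs
begin

text \<open>
  Write \<partial> for the derivative in P. Since D raises weights by 2 and \<partial> D - D \<partial> is 1/12 times
  the weight operator, a modular form f of weight k (so \<partial> f = 0) satisfies
  \<partial>^a D^N f = (\<Prod>i<a. (N - i) (k + N - i - 1) / 12) D^(N-a) f.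
  Comparing coefficients, the coefficient of P^a Q^b R^c in D^N f equals
  a! (N choose a) ((k+N-1) choose a) / 12^a times a coefficient of D^(N-a) f, and
  a (N choose a) = N ((N-1) choose (a-1)) makes it divisible by N = p^2 whenever a > 0,
  provided f has p-integral coefficients.

  For that, write f = Q^\<beta> R^\<gamma> (Q^3)^d h(R^2/Q^3) with a polynomial h. With
  u = 1 - E6^2/E4^3 = 1728/j = 1728 q + \<dots>, the series h(1 - u) is the p-integral q-expansion
  of f divided by a unit, and since 1728 = 2^6 3^3 is prime to p, the coefficients of h(1 - x)
  can be read off one at a time from it; hence h, and so f, is p-integral.
\<close>

section \<open>p-integral rationals\<close>

lemma in_Zp_iff:
  "in_Zp p r \<longleftrightarrow> (\<exists>a b. b \<noteq> 0 \<and> coprime (int p) b \<and> r = of_int a / of_int b)"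
proof
  assume "in_Zp p r"
  obtain a b where q: "quotient_of r = (a, b)" by (cases "quotient_of r")
  then show "\<exists>a b. b \<noteq> 0 \<and> coprime (int p) b \<and> r = of_int a / of_int b"
    using \<open>in_Zp p r\<close> quotient_of_div[OF q] quotient_of_denom_pos[OF q]
    unfolding in_Zp_def by (intro exI[of _ a] exI[of _ b]) auto
next
  assume "\<exists>a b. b \<noteq> 0 \<and> coprime (int p) b \<and> r = of_int a / of_int b"
  then obtain a b where "b \<noteq> 0" and cb: "coprime (int p) b" and r: "r = of_int a / of_int b"
    by blast
  obtain a' b' where q: "quotient_of r = (a', b')" by (cases "quotient_of r")
  have r': "r = of_int a' / of_int b'" and "b' > 0" and cop: "coprime a' b'"
    using quotient_of_div[OF q] quotient_of_denom_pos[OF q] quotient_of_coprime[OF q] by auto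
  have "of_int (a' * b) = (of_int (a * b') :: rat)"
    using r r' \<open>b \<noteq> 0\<close> \<open>b' > 0\<close> by (simp add: field_simps)
  then have "b' dvd a' * b" by (metis dvd_triv_right of_int_eq_iff)
  then have "b' dvd b" using cop by (metis coprime_commute coprime_dvd_mult_right_iff)
  then have "coprime (int p) b'" using cb by (meson coprime_divisors dvd_refl)
  then show "in_Zp p r" using q unfolding in_Zp_def by simp
qed

lemma in_Zp_of_int [simp]: "in_Zp p (of_int n)"
  unfolding in_Zp_iff by (intro exI[of _ n] exI[of _ 1]) simp

lemma in_Zp_of_nat [simp]: "in_Zp p (of_nat n)"
  using in_Zp_of_int[of p "int n"] by simp

lemma in_Zp_0 [simp]: "in_Zp p 0" and in_Zp_1 [simp]: "in_Zp p 1"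
  using in_Zp_of_int[of p 0] in_Zp_of_int[of p 1] by simp_all

lemma in_Zp_Ints: "r \<in> \<int> \<Longrightarrow> in_Zp p r"
  by (auto elim: Ints_cases)

lemma in_Zp_add:
  assumes "in_Zp p r" "in_Zp p s" shows "in_Zp p (r + s)"
proof -
  obtain a b c d where h: "b \<noteq> 0" "coprime (int p) b" "r = of_int a / of_int b"
      "d \<noteq> 0" "coprime (int p) d" "s = of_int c / of_int d"
    using assms unfolding in_Zp_iff by blast
  then have "r + s = of_int (a * d + c * b) / of_int (b * d)" by (simp add: field_simps)
  with h show ?thesis unfolding in_Zp_iff by (intro exI[of _ "a * d + c * b"] exI[of _ "b * d"]) auto
qed

lemma in_Zp_mult:
  assumes "in_Zp p r" "in_Zp p s" shows "in_Zp p (r * s)"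
proof -
  obtain a b c d where h: "b \<noteq> 0" "coprime (int p) b" "r = of_int a / of_int b"
      "d \<noteq> 0" "coprime (int p) d" "s = of_int c / of_int d"
    using assms unfolding in_Zp_iff by blast
  then show ?thesis unfolding in_Zp_iff by (intro exI[of _ "a * c"] exI[of _ "b * d"]) auto
qed

lemma in_Zp_divide:
  assumes "in_Zp p r" "coprime (int p) b" shows "in_Zp p (r / of_int b)"
proof -
  obtain a c where h: "c \<noteq> 0" "coprime (int p) c" "r = of_int a / of_int c"
    using assms(1) unfolding in_Zp_iff by blast
  show ?thesis
  proof (cases "b = 0")
    case False
    with h assms(2) show ?thesis
      unfolding in_Zp_iff by (intro exI[of _ a] exI[of _ "c * b"]) auto
  qed simp
qed

lemma in_Zp_uminus: "in_Zp p r \<Longrightarrow> in_Zp p (- r)"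
  using in_Zp_mult[OF in_Zp_of_int[of p "-1"]] by simp

lemma in_Zp_diff: "in_Zp p r \<Longrightarrow> in_Zp p s \<Longrightarrow> in_Zp p (r - s)"
  unfolding diff_conv_add_uminus by (intro in_Zp_add in_Zp_uminus)

lemma in_Zp_sum: "(\<And>i. i \<in> A \<Longrightarrow> in_Zp p (f i)) \<Longrightarrow> in_Zp p (\<Sum>i\<in>A. f i)"
  by (induction A rule: infinite_finite_induct) (auto intro: in_Zp_add)

lemma coprime_prime_2_3_powers:
  assumes "prime p" "p \<ge> 5"
  shows "coprime (int p) (2 ^ i * 3 ^ j)"
proof -
  have "prime (int p)" using assms(1) by simp
  moreover have "\<not> int p dvd 2" "\<not> int p dvd 3" using assms(2) by (auto dest: zdvd_imp_le)
  ultimately have "coprime (int p) 2" "coprime (int p) 3" using prime_imp_coprime by blast+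
  then show ?thesis by simp
qed

lemma in_Zp_divide_2_3_powers:
  assumes "prime p" "p \<ge> 5" "in_Zp p r"
  shows "in_Zp p (r / (2 ^ i * 3 ^ j))"
  using in_Zp_divide[OF assms(3) coprime_prime_2_3_powers[OF assms(1,2)]] by simp

lemma in_Zp_divide_12_power:
  assumes "prime p" "p \<ge> 5" "in_Zp p r"
  shows "in_Zp p (r / 12 ^ n)"
proof -
  have "(12 :: rat) ^ n = 2 ^ (2 * n) * 3 ^ n"
    by (simp add: power_mult flip: power_mult_distrib)
  then show ?thesis using in_Zp_divide_2_3_powers[OF assms] by simp
qed

section \<open>Iterates of D on modular forms\<close>

lemma coeffPQR_eqI: "(\<And>a b c. coeffPQR F a b c = coeffPQR G a b c) \<Longrightarrow> F = G"
  unfolding coeffPQR_def by (intro poly_eqI) blast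

lemma coeffPQR_add [simp]: "coeffPQR (F + G) a b c = coeffPQR F a b c + coeffPQR G a b c"
  and coeffPQR_diff [simp]: "coeffPQR (F - G) a b c = coeffPQR F a b c - coeffPQR G a b c"
  and coeffPQR_0 [simp]: "coeffPQR 0 a b c = 0"
  by (simp_all add: coeffPQR_def)

lemma coeffPQR_cst [simp]: "coeffPQR (cst r) a b c = (if a = 0 \<and> b = 0 \<and> c = 0 then r else 0)"
  and coeffPQR_cst_mult [simp]: "coeffPQR (cst r * F) a b c = r * coeffPQR F a b c"
  by (simp_all add: coeffPQR_def cst_def coeff_pCons')

lemma coeffPQR_varP_mult [simp]:
    "coeffPQR (varP * F) a b c = (if a = 0 then 0 else coeffPQR F (a - 1) b c)"
  and coeffPQR_varQ_mult [simp]: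
    "coeffPQR (varQ * F) a b c = (if b = 0 then 0 else coeffPQR F a (b - 1) c)"
  and coeffPQR_varR_mult [simp]:
    "coeffPQR (varR * F) a b c = (if c = 0 then 0 else coeffPQR F a b (c - 1))"
  by (simp_all add: coeffPQR_def varP_def varQ_def varR_def coeff_pCons')

lemma coeffPQR_dP [simp]: "coeffPQR (dP F) a b c = of_nat (Suc a) * coeffPQR F (Suc a) b c"
  and coeffPQR_dQ [simp]: "coeffPQR (dQ F) a b c = of_nat (Suc b) * coeffPQR F a (Suc b) c"
  and coeffPQR_dR [simp]: "coeffPQR (dR F) a b c = of_nat (Suc c) * coeffPQR F a b (Suc c)"
  by (simp_all add: coeffPQR_def dP_def dQ_def dR_def coeff_map_poly coeff_pderiv of_nat_poly)

lemma cst_mult: "cst r * cst s = cst (r * s)"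
  and cst_add: "cst (r + s) = cst r + cst s"
  and cst_0: "cst 0 = 0"
  by (simp_all add: cst_def)

lemma Dop_expand:
  "Dop F = cst (1/12) * (varP * (varP * dP F)) - cst (1/12) * (varQ * dP F)
         + cst (1/3) * (varP * (varQ * dQ F)) - cst (1/3) * (varR * dQ F)
         + cst (1/2) * (varP * (varR * dR F)) - cst (1/2) * (varQ * (varQ * dR F))"
  unfolding Dop_def power2_eq_square by (simp add: algebra_simps)

lemma Dop_cst_mult: "Dop (cst r * F) = cst r * Dop F"
  by (rule coeffPQR_eqI) (simp add: Dop_expand; simp add: algebra_simps)

lemma Dop_0 [simp]: "Dop 0 = 0"
  by (simp add: Dop_def dP_def dQ_def dR_def)

lemma dP_cst_mult: "dP (cst r * F) = cst r * dP F"
  by (rule coeffPQR_eqI) simp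

definition weight_op :: "pqr \<Rightarrow> pqr" where
  "weight_op F = cst 2 * (varP * dP F) + cst 4 * (varQ * dQ F) + cst 6 * (varR * dR F)"

lemma coeffPQR_weight_op: "coeffPQR (weight_op F) a b c = of_nat (2*a + 4*b + 6*c) * coeffPQR F a b c"
  unfolding weight_op_def by (cases a; cases b; cases c) (simp_all add: ring_distribs)

lemma dP_Dop_commute: "dP (Dop F) = Dop (dP F) + cst (1/12) * weight_op F"
proof (rule coeffPQR_eqI)
  fix a b c
  show "coeffPQR (dP (Dop F)) a b c = coeffPQR (Dop (dP F) + cst (1/12) * weight_op F) a b c"
    unfolding coeffPQR_add coeffPQR_cst_mult coeffPQR_weight_op coeffPQR_dP Dop_expand
    by (cases a; cases b; cases c) (simp_all add: ring_distribs, auto simp: field_simps)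
qed

definition isobaric :: "nat \<Rightarrow> pqr \<Rightarrow> bool" where
  "isobaric w F \<longleftrightarrow> (\<forall>a b c. coeffPQR F a b c \<noteq> 0 \<longrightarrow> 2*a + 4*b + 6*c = w)"

lemma isobaric_Dop:
  assumes "isobaric w F" shows "isobaric (w + 2) (Dop F)"
  unfolding isobaric_def
proof (intro allI impI)
  fix a b c
  have vanish: "\<And>a b c. 2*a + 4*b + 6*c \<noteq> w \<Longrightarrow> coeffPQR F a b c = 0"
    using assms unfolding isobaric_def by blast
  have "2*a + 4*b + 6*c \<noteq> w + 2 \<Longrightarrow> coeffPQR (Dop F) a b c = 0"
    unfolding Dop_expand by (cases a; cases b; cases c) (simp_all add: vanish)
  then show "coeffPQR (Dop F) a b c \<noteq> 0 \<Longrightarrow> 2*a + 4*b + 6*c = w + 2" by blast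
qed

lemma isobaric_Dop_funpow: "isobaric k f \<Longrightarrow> isobaric (k + 2*m) ((Dop ^^ m) f)"
  by (induction m) (simp_all add: isobaric_Dop[where w = "k + 2*_", simplified])

lemma weight_op_isobaric:
  assumes "isobaric w F" shows "weight_op F = cst (of_nat w) * F"
proof (rule coeffPQR_eqI)
  fix a b c
  show "coeffPQR (weight_op F) a b c = coeffPQR (cst (of_nat w) * F) a b c"
    using assms unfolding isobaric_def coeffPQR_weight_op coeffPQR_cst_mult
    by (metis mult_zero_right)
qed

lemma dP_Dop_funpow:
  assumes "dP f = 0" "isobaric k f"
  shows "dP ((Dop ^^ m) f) = cst (of_nat m * (of_nat k + of_nat m - 1) / 12) * (Dop ^^ (m - 1)) f"
proof (induction m)
  case 0
  then show ?case using assms by (simp add: cst_0)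
next
  case (Suc m)
  have "dP ((Dop ^^ Suc m) f) = Dop (dP ((Dop ^^ m) f)) + cst (1/12) * weight_op ((Dop ^^ m) f)"
    by (simp add: dP_Dop_commute)
  also have "\<dots> = Dop (cst (of_nat m * (of_nat k + of_nat m - 1) / 12) * (Dop ^^ (m - 1)) f)
      + cst (1/12) * (cst (of_nat (k + 2*m)) * (Dop ^^ m) f)"
    by (simp only: Suc weight_op_isobaric[OF isobaric_Dop_funpow[OF assms(2)]])
  also have "\<dots> = cst (of_nat m * (of_nat k + of_nat m - 1) / 12) * (Dop ^^ m) f
      + cst (of_nat (k + 2*m) / 12) * (Dop ^^ m) f"
    by (cases m) (simp_all add: Dop_cst_mult cst_0 cst_mult flip: mult.assoc)
  also have "\<dots> = cst (of_nat m * (of_nat k + of_nat m - 1) / 12 + of_nat (k + 2*m) / 12) * (Dop ^^ m) f"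
    by (simp only: cst_add distrib_right)
  also have "of_nat m * (of_nat k + of_nat m - 1) / 12 + of_nat (k + 2*m) / 12
      = (of_nat (Suc m) * (of_nat k + of_nat (Suc m) - 1) / 12 :: rat)"
    by (simp add: field_simps)
  finally show ?case by simp
qed

lemma dP_funpow_Dop_funpow:
  assumes "dP f = 0" "isobaric k f"
  shows "(dP ^^ j) ((Dop ^^ n) f) =
    cst (\<Prod>i<j. of_nat (n - i) * (of_nat k + of_nat (n - i) - 1) / 12) * (Dop ^^ (n - j)) f"
proof (induction j)
  case 0
  then show ?case by (rule coeffPQR_eqI) simp
next
  case (Suc j)
  have "(dP ^^ Suc j) ((Dop ^^ n) f) =
      cst (\<Prod>i<j. of_nat (n - i) * (of_nat k + of_nat (n - i) - 1) / 12) * dP ((Dop ^^ (n - j)) f)"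
    by (simp add: Suc dP_cst_mult)
  then show ?case
    by (simp add: dP_Dop_funpow[OF assms] prod.lessThan_Suc cst_mult flip: mult.assoc)
qed

lemma coeffPQR_dP_funpow:
  "coeffPQR ((dP ^^ j) F) a b c = pochhammer (of_nat (Suc a)) j * coeffPQR F (a + j) b c"
proof (induction j arbitrary: a F)
  case (Suc j)
  then show ?case by (simp add: pochhammer_rec algebra_simps)
qed simp

lemma prod_of_nat_diff_eq_fact_binomial:
  "(\<Prod>i<a. of_nat (n - i) :: 'a::field_char_0) = fact a * of_nat (n choose a)"
proof (cases "a \<le> n")
  case True
  then have "(\<Prod>i<a. of_nat (n - i) :: 'a) = (\<Prod>i = 0..<a. of_nat n - of_nat i)"
    by (intro prod.cong) (auto simp: of_nat_diff)
  then show ?thesis by (simp add: binomial_gbinomial gbinomial_mult_fact)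
next
  case False
  then have "(\<Prod>i<a. of_nat (n - i) :: 'a) = 0" by (intro prod_zero) auto
  moreover have "n choose a = 0" using False by simp
  ultimately show ?thesis by (simp only: of_nat_0 mult_zero_right)
qed

lemma coeffPQR_Dop_funpow:
  assumes "dP f = 0" "isobaric k f"
  shows "coeffPQR ((Dop ^^ N) f) a b c =
    fact a * of_nat (N choose a) * of_nat ((k + N - 1) choose a) / 12 ^ a
      * coeffPQR ((Dop ^^ (N - a)) f) 0 b c"
proof -
  define C where "C = (\<Prod>i<a. of_nat (N - i) * (of_nat k + of_nat (N - i) - 1) / 12 :: rat)"
  have C_split: "C = (\<Prod>i<a. of_nat (N - i)) * (\<Prod>i<a. of_nat k + of_nat (N - i) - 1) / 12 ^ a"
    unfolding C_def prod_dividef prod.distrib by simp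
  have C_eq: "C = fact a * (fact a * of_nat (N choose a) * of_nat ((k + N - 1) choose a) / 12 ^ a)"
  proof (cases "a \<le> N")
    case True
    then have "(\<Prod>i<a. of_nat k + of_nat (N - i) - 1 :: rat) = (\<Prod>i<a. of_nat (k + N - 1 - i))"
      by (intro prod.cong) (auto simp: of_nat_diff)
    then show ?thesis
      unfolding C_split prod_of_nat_diff_eq_fact_binomial by (simp add: mult_ac)
  next
    case False
    then have "C = 0" unfolding C_def by (intro prod_zero) auto
    moreover have "N choose a = 0" using False by simp
    ultimately show ?thesis by (simp only: of_nat_0 mult_zero_right mult_zero_left div_0)
  qed
  have "(dP ^^ a) ((Dop ^^ N) f) = cst C * (Dop ^^ (N - a)) f"
    unfolding C_def by (rule dP_funpow_Dop_funpow[OF assms])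
  then have "fact a * coeffPQR ((Dop ^^ N) f) a b c = C * coeffPQR ((Dop ^^ (N - a)) f) 0 b c"
    using coeffPQR_dP_funpow[of a "(Dop ^^ N) f" 0 b c] by (simp add: pochhammer_fact)
  then show ?thesis
    unfolding C_eq mult.assoc by (rule mult_left_cancel[OF fact_nonzero, THEN iffD1])
qed

lemma fact_Suc_times_binomial:
  "(fact (Suc j) * of_nat (N choose Suc j) :: 'a::{comm_semiring_1, semiring_char_0}) =
    of_nat N * (fact j * of_nat ((N - 1) choose j))"
proof -
  have "(fact (Suc j) * of_nat (N choose Suc j) :: 'a) = fact j * of_nat (Suc j * (N choose Suc j))"
    by (simp only: fact_Suc of_nat_mult mult_ac)
  also have "\<dots> = of_nat N * (fact j * of_nat ((N - 1) choose j))"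
    by (simp only: binomial_absorption of_nat_mult mult_ac)
  finally show ?thesis .
qed

lemma coeffPQR_Dop_funpow_Suc:
  assumes "dP f = 0" "isobaric k f"
  shows "coeffPQR ((Dop ^^ N) f) (Suc j) b c = of_nat N *
    (fact j * of_nat ((N - 1) choose j) * of_nat ((k + N - 1) choose Suc j)
      * coeffPQR ((Dop ^^ (N - Suc j)) f) 0 b c / 12 ^ Suc j)"
  unfolding coeffPQR_Dop_funpow[OF assms, of N "Suc j"] fact_Suc_times_binomial
  by (simp only: mult_ac times_divide_eq_left times_divide_eq_right)

section \<open>p-integral power series and polynomials\<close>

definition fps_in_Zp :: "nat \<Rightarrow> rat fps \<Rightarrow> bool" where
  "fps_in_Zp p F \<longleftrightarrow> (\<forall>n. in_Zp p (F $ n))"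

lemma fps_in_Zp_diff: "fps_in_Zp p F \<Longrightarrow> fps_in_Zp p G \<Longrightarrow> fps_in_Zp p (F - G)"
  by (simp add: fps_in_Zp_def in_Zp_diff)

lemma fps_in_Zp_mult: "fps_in_Zp p F \<Longrightarrow> fps_in_Zp p G \<Longrightarrow> fps_in_Zp p (F * G)"
  unfolding fps_in_Zp_def fps_mult_nth by (auto intro!: in_Zp_sum in_Zp_mult)

lemma fps_in_Zp_const: "in_Zp p r \<Longrightarrow> fps_in_Zp p (fps_const r)"
  by (simp add: fps_in_Zp_def fps_nth_fps_const)

lemma fps_in_Zp_power: "fps_in_Zp p F \<Longrightarrow> fps_in_Zp p (F ^ n)"
  by (induction n) (auto intro: fps_in_Zp_mult fps_in_Zp_const[of p 1, simplified])

lemma fps_in_Zp_cancel_unit: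
  assumes "w $ 0 = 1" "fps_in_Zp p w" "fps_in_Zp p (w * G)"
  shows "fps_in_Zp p G"
  unfolding fps_in_Zp_def
proof
  fix n show "in_Zp p (G $ n)"
  proof (induction n rule: less_induct)
    case (less n)
    have "(w * G) $ n = w $ 0 * G $ n + (\<Sum>i=Suc 0..n. w $ i * G $ (n - i))"
      by (simp add: fps_mult_nth sum.atLeast_Suc_atMost)
    then have "G $ n = (w * G) $ n - (\<Sum>i=Suc 0..n. w $ i * G $ (n - i))"
      using assms(1) by simp
    moreover have "in_Zp p (\<Sum>i=Suc 0..n. w $ i * G $ (n - i))"
      using assms(2) less by (auto simp: fps_in_Zp_def intro!: in_Zp_sum in_Zp_mult)
    moreover have "in_Zp p ((w * G) $ n)" using assms(3) unfolding fps_in_Zp_def ..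
    ultimately show ?case by (simp add: in_Zp_diff)
  qed
qed

lemma fps_in_Zp_cancel_X_unit:
  assumes "u $ 0 = 0" "u $ 1 \<noteq> 0" "in_Zp p (1 / u $ 1)"
    and "fps_in_Zp p u" "fps_in_Zp p (u * G)"
  shows "fps_in_Zp p G"
  unfolding fps_in_Zp_def
proof
  fix n show "in_Zp p (G $ n)"
  proof (induction n rule: less_induct)
    case (less n)
    define S where "S = (\<Sum>i=Suc (Suc 0)..Suc n. u $ i * G $ (Suc n - i))"
    have "(u * G) $ Suc n = u $ 0 * G $ Suc n + (u $ 1 * G $ n + S)"
      unfolding S_def by (simp add: fps_mult_nth sum.atLeast_Suc_atMost)
    then have G_eq: "G $ n = ((u * G) $ Suc n - S) * (1 / u $ 1)"
      using assms(1,2) by (simp add: field_simps)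
    have "in_Zp p S"
      unfolding S_def
      by (rule in_Zp_sum) (use assms(4) less in \<open>auto simp: fps_in_Zp_def intro!: in_Zp_mult\<close>)
    moreover have "in_Zp p ((u * G) $ Suc n)" using assms(5) unfolding fps_in_Zp_def ..
    ultimately show ?case unfolding G_eq using assms(3) by (intro in_Zp_mult in_Zp_diff)
  qed
qed

definition poly_fps :: "rat poly \<Rightarrow> rat fps \<Rightarrow> rat fps" where
  "poly_fps g z = poly (map_poly fps_const g) z"

lemma poly_fps_0 [simp]: "poly_fps 0 z = 0"
  and poly_fps_pCons [simp]: "poly_fps (pCons a g) z = fps_const a + z * poly_fps g z"
  by (simp_all add: poly_fps_def map_poly_pCons)

lemma poly_fps_add [simp]: "poly_fps (g + h) z = poly_fps g z + poly_fps h z"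
proof (induction g arbitrary: h)
  case (pCons a g)
  then show ?case by (cases h) (simp_all add: algebra_simps flip: fps_const_add)
qed simp

lemma poly_fps_smult [simp]: "poly_fps (smult a g) z = fps_const a * poly_fps g z"
  by (induction g) (simp_all add: algebra_simps flip: fps_const_mult)

lemma poly_fps_mult [simp]: "poly_fps (g * h) z = poly_fps g z * poly_fps h z"
  by (induction g) (simp_all add: algebra_simps)

lemma poly_fps_monom: "poly_fps (monom a i) z = fps_const a * z ^ i"
  by (simp add: poly_fps_def map_poly_monom poly_monom)

lemma poly_fps_sum: "poly_fps (\<Sum>i\<in>A. g i) z = (\<Sum>i\<in>A. poly_fps (g i) z)"
  by (induction A rule: infinite_finite_induct) simp_all

lemma poly_fps_pcompose: "poly_fps (pcompose g h) z = poly_fps g (poly_fps h z)"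
  by (induction g) (simp_all add: pcompose_pCons)

definition poly_in_Zp :: "nat \<Rightarrow> rat poly \<Rightarrow> bool" where
  "poly_in_Zp p g \<longleftrightarrow> (\<forall>i. in_Zp p (coeff g i))"

lemma poly_in_Zp_0 [simp]: "poly_in_Zp p 0"
  by (simp add: poly_in_Zp_def)

lemma poly_in_Zp_pCons: "poly_in_Zp p (pCons a g) \<longleftrightarrow> in_Zp p a \<and> poly_in_Zp p g"
  unfolding poly_in_Zp_def by (metis coeff_pCons_0 coeff_pCons_Suc not0_implies_Suc)

lemma poly_in_Zp_add: "poly_in_Zp p g \<Longrightarrow> poly_in_Zp p h \<Longrightarrow> poly_in_Zp p (g + h)"
  unfolding poly_in_Zp_def by (simp add: in_Zp_add)

lemma poly_in_Zp_mult: "poly_in_Zp p g \<Longrightarrow> poly_in_Zp p h \<Longrightarrow> poly_in_Zp p (g * h)"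
  unfolding poly_in_Zp_def coeff_mult by (auto intro!: in_Zp_sum in_Zp_mult)

lemma poly_in_Zp_pcompose: "poly_in_Zp p g \<Longrightarrow> poly_in_Zp p h \<Longrightarrow> poly_in_Zp p (pcompose g h)"
proof (induction g)
  case (pCons a g)
  then have "poly_in_Zp p [:a:]" "poly_in_Zp p g" by (simp_all add: poly_in_Zp_pCons)
  with pCons show ?case by (simp add: pcompose_pCons poly_in_Zp_add poly_in_Zp_mult)
qed simp

lemma poly_in_Zp_if_poly_fps_in_Zp:
  assumes "u $ 0 = 0" "u $ 1 \<noteq> 0" "in_Zp p (1 / u $ 1)" "fps_in_Zp p u"
  shows "fps_in_Zp p (poly_fps g u) \<Longrightarrow> poly_in_Zp p g"
proof (induction g)
  case (pCons a g)
  have "poly_fps (pCons a g) u $ 0 = a" using assms(1) by simp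
  then have a: "in_Zp p a" using pCons.prems unfolding fps_in_Zp_def by metis
  have "u * poly_fps g u = poly_fps (pCons a g) u - fps_const a" by simp
  then have "fps_in_Zp p (u * poly_fps g u)"
    using pCons.prems fps_in_Zp_const[OF a] by (metis fps_in_Zp_diff)
  then have "poly_in_Zp p g" by (rule pCons.IH[OF fps_in_Zp_cancel_X_unit[OF assms]])
  with a show ?case by (simp add: poly_in_Zp_pCons)
qed simp

section \<open>Modular forms with integral q-expansion are p-integral\<close>

lemma E4q_nth_0 [simp]: "E4q $ 0 = 1"
  and E6q_nth_0 [simp]: "E6q $ 0 = 1"
  and E4q_nth_1 [simp]: "E4q $ Suc 0 = 240"
  and E6q_nth_1 [simp]: "E6q $ Suc 0 = -504"
  by (simp_all add: E4q_def E6q_def sigma_def)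

lemma fps_in_Zp_E4q: "fps_in_Zp p E4q"
  and fps_in_Zp_E6q: "fps_in_Zp p E6q"
  unfolding fps_in_Zp_def E4q_def E6q_def by (auto intro: in_Zp_Ints)

lemma fps_power_nth_1: "F $ 0 = (1 :: 'a::comm_ring_1) \<Longrightarrow> (F ^ n) $ Suc 0 = of_nat n * F $ Suc 0"
  by (induction n) (simp_all add: fps_power_zeroth_eq_one algebra_simps)

text \<open>The q-expansion of 1728/j = 1728 \<Delta>/E4^3.\<close>
definition j_recip :: "rat fps" where
  "j_recip = (E4q ^ 3 - E6q ^ 2) * inverse (E4q ^ 3)"

lemma E4q_cube_mult_inverse: "E4q ^ 3 * inverse (E4q ^ 3) = 1"
  by (simp add: inverse_mult_eq_1' fps_power_zeroth)

lemma one_minus_j_recip: "1 - j_recip = E6q ^ 2 * inverse (E4q ^ 3)"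
  by (simp add: j_recip_def algebra_simps E4q_cube_mult_inverse)

lemma j_recip_nth_0: "j_recip $ 0 = 0"
  and j_recip_nth_1: "j_recip $ Suc 0 = 1728"
proof -
  have "inverse (E4q ^ 3) $ 0 = 1"
    using arg_cong[OF E4q_cube_mult_inverse, of "\<lambda>F. F $ 0"] by (simp add: fps_power_zeroth)
  then show "j_recip $ 0 = 0" "j_recip $ Suc 0 = 1728"
    by (simp_all add: j_recip_def fps_power_zeroth fps_power_nth_1)
qed

lemma fps_in_Zp_j_recip: "fps_in_Zp p j_recip"
proof -
  have "fps_in_Zp p (inverse (E4q ^ 3))"
    by (rule fps_in_Zp_cancel_unit[of "E4q ^ 3"])
      (simp_all add: fps_power_zeroth fps_in_Zp_power fps_in_Zp_E4q E4q_cube_mult_inverse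
        fps_in_Zp_const[of p 1, simplified])
  then show ?thesis
    unfolding j_recip_def
    by (intro fps_in_Zp_mult fps_in_Zp_diff fps_in_Zp_power fps_in_Zp_E4q fps_in_Zp_E6q)
qed

lemma poly_in_Zp_if_poly_fps_one_minus_j_recip_in_Zp:
  assumes "prime p" "p \<ge> 5" "fps_in_Zp p (poly_fps h (1 - j_recip))"
  shows "poly_in_Zp p h"
proof -
  have "poly_fps [:1, -1:] j_recip = 1 - j_recip"
    by (simp add: mult_minus_right flip: fps_const_neg)
  with assms(3) have "fps_in_Zp p (poly_fps (pcompose h [:1, -1:]) j_recip)"
    by (simp add: poly_fps_pcompose)
  moreover have "in_Zp p (1 / j_recip $ 1)"
    using in_Zp_divide_2_3_powers[OF assms(1,2) in_Zp_1, of 6 3] by (simp add: j_recip_nth_1)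
  ultimately have "poly_in_Zp p (pcompose h [:1, -1:])"
    using poly_in_Zp_if_poly_fps_in_Zp[OF j_recip_nth_0 _ _ fps_in_Zp_j_recip]
    by (simp add: j_recip_nth_1)
  moreover have "poly_in_Zp p [:1, -1:]"
    by (simp add: poly_in_Zp_pCons in_Zp_uminus)
  ultimately have "poly_in_Zp p (pcompose (pcompose h [:1, -1:]) [:1, -1:])"
    by (rule poly_in_Zp_pcompose)
  moreover have "pcompose [:1, -1:] [:1, -1:] = [:0, 1 :: rat:]"
    by (simp add: pcompose_pCons)
  ultimately show ?thesis
    by (simp flip: pcompose_assoc)
qed

lemma modular_form_dP: "modular_form k f \<Longrightarrow> dP f = 0"
  unfolding modular_form_def by (rule coeffPQR_eqI) auto

lemma modular_form_isobaric: "modular_form k f \<Longrightarrow> isobaric k f"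
  unfolding modular_form_def isobaric_def by fastforce

lemma weight_4_6_exponents:
  fixes b c b' c' :: nat
  defines "B \<equiv> b' + 3 * (c' div 2)" and "c0 \<equiv> c' mod 2"
  shows "4*b + 6*c = 4*b' + 6*c' \<longleftrightarrow> (\<exists>i \<le> B div 3. b = B - 3*i \<and> c = c0 + 2*i)"
proof -
  have normal: "4*b' + 6*c' = 4*B + 6*c0"
  proof -
    obtain q r where "c' div 2 = q" "c' mod 2 = r" by blast
    moreover have "c' = 2*(c' div 2) + c' mod 2" by simp
    ultimately show ?thesis unfolding B_def c0_def by simp
  qed
  show ?thesis
  proof
    assume "4*b + 6*c = 4*b' + 6*c'"
    then have h: "2*b + 3*c = 2*B + 3*c0" using normal by linarith
    \<comment> \<open>naming \<open>c div 2\<close> keeps linarith from case-splitting on the division\<close>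
    obtain i where i: "c div 2 = i" by blast
    have "c mod 2 = c0"
      using arg_cong[OF h, of even] unfolding c0_def by (simp add: mod2_eq_if)
    then have c: "c = c0 + 2*i" using i div_mult_mod_eq[of c 2] by linarith
    with h have "b = B - 3*i" "i \<le> B div 3" by linarith+
    with c show "\<exists>i \<le> B div 3. b = B - 3*i \<and> c = c0 + 2*i" by blast
  next
    assume "\<exists>i \<le> B div 3. b = B - 3*i \<and> c = c0 + 2*i"
    then obtain i where "i \<le> B div 3" "b = B - 3*i" "c = c0 + 2*i" by blast
    moreover obtain d where "B div 3 = d" by blast
    moreover have "3 * (B div 3) \<le> B" by simp
    ultimately show "4*b + 6*c = 4*b' + 6*c'" using normal by linarith
  qed
qed

lemma sum_weight_4_6:
  fixes F :: "nat \<Rightarrow> nat \<Rightarrow> 'a::comm_monoid_add"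
  assumes "\<And>b c. F b c \<noteq> 0 \<Longrightarrow> 4*b + 6*c = k" and "4*b' + 6*c' = k"
  defines "B \<equiv> b' + 3 * (c' div 2)" and "c0 \<equiv> c' mod 2"
  shows "(\<Sum>c\<le>k. \<Sum>b\<le>k. F b c) = (\<Sum>i\<le>B div 3. F (B - 3*i) (c0 + 2*i))"
proof -
  note exponents = weight_4_6_exponents[of _ _ b' c', folded B_def c0_def]
  define g where "g i = (c0 + 2*i, B - 3*i)" for i
  have "inj_on g {..B div 3}" unfolding g_def by (auto intro: inj_onI)
  have "(\<Sum>c\<le>k. \<Sum>b\<le>k. F b c) = (\<Sum>(c, b)\<in>{..k} \<times> {..k}. F b c)"
    by (rule sum.cartesian_product)
  also have "\<dots> = (\<Sum>(c, b)\<in>g ` {..B div 3}. F b c)"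
  proof (rule sum.mono_neutral_right)
    show "g ` {..B div 3} \<subseteq> {..k} \<times> {..k}"
      using exponents assms(2) unfolding g_def by fastforce
    show "\<forall>y\<in>{..k} \<times> {..k} - g ` {..B div 3}. (case y of (c, b) \<Rightarrow> F b c) = 0"
      using assms exponents unfolding g_def by fastforce
  qed simp
  also have "\<dots> = (\<Sum>i\<le>B div 3. F (B - 3*i) (c0 + 2*i))"
    by (subst sum.reindex[OF \<open>inj_on g {..B div 3}\<close>]) (simp add: g_def)
  finally show ?thesis .
qed

lemma poly_eq_sum_atMost:
  fixes x :: "'a::comm_semiring_1"
  assumes "degree g \<le> n"
  shows "poly g x = (\<Sum>i\<le>n. coeff g i * x ^ i)"
  unfolding poly_altdef using assms
  by (intro sum.mono_neutral_left) (auto simp: coeff_eq_0)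

lemma qexp_modular_form:
  assumes "modular_form k f"
  shows "qexp f = (\<Sum>c\<le>k. \<Sum>b\<le>k. fps_const (coeffPQR f 0 b c) * E4q ^ b * E6q ^ c)"
proof -
  have mf: "coeffPQR f a b c \<noteq> 0 \<Longrightarrow> a = 0 \<and> 4*b + 6*c = k" for a b c
    using assms unfolding modular_form_def by blast
  have const: "coeff (coeff f c) b = [:coeffPQR f 0 b c:]" for b c
    by (rule poly_eqI) (use mf in \<open>auto simp: coeffPQR_def coeff_pCons'\<close>)
  have vanish: "coeffPQR f 0 b c = 0" if "k < b \<or> k < c" for b c
    using mf that by force
  have deg_c: "degree (coeff f c) \<le> k" for c
    by (rule degree_le) (auto simp: const vanish)
  have deg: "degree f \<le> k"
    by (rule degree_le) (auto intro!: poly_eqI simp: const vanish)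
  define \<psi> where "\<psi> h = poly_fps h E2q" for h
  define \<phi> where "\<phi> g = poly (map_poly \<psi> g) E4q" for g :: "rat poly poly"
  have \<psi>_0: "\<psi> 0 = 0" and \<psi>_const: "\<psi> [:r:] = fps_const r" for r
    by (simp_all add: \<psi>_def)
  have "qexp f = poly (map_poly \<phi> f) E6q"
    unfolding qexp_def \<phi>_def \<psi>_def poly_fps_def ..
  also have "\<dots> = (\<Sum>c\<le>k. \<phi> (coeff f c) * E6q ^ c)"
    by (subst poly_eq_sum_atMost[OF order_trans[OF map_poly_degree_leq deg]])
      (simp add: coeff_map_poly \<phi>_def)
  also have "\<dots> = (\<Sum>c\<le>k. (\<Sum>b\<le>k. fps_const (coeffPQR f 0 b c) * E4q ^ b) * E6q ^ c)"
    unfolding \<phi>_def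
    by (subst poly_eq_sum_atMost[OF order_trans[OF map_poly_degree_leq deg_c]])
      (simp add: coeff_map_poly const \<psi>_0 \<psi>_const)
  finally show ?thesis by (simp only: sum_distrib_right)
qed

lemma E4q_E6q_power_factor:
  assumes "i \<le> d" "3 * d \<le> B"
  shows "E4q ^ (B - 3*i) * E6q ^ (c + 2*i) =
    E4q ^ (B - 3*d) * E6q ^ c * (E4q ^ 3) ^ d * (1 - j_recip) ^ i"
proof -
  have "B - 3*i = (B - 3*d) + 3*(d - i)" "d = (d - i) + i" using assms by linarith+
  then have E4_split: "E4q ^ (B - 3*i) = E4q ^ (B - 3*d) * (E4q ^ 3) ^ (d - i)"
    and E4_cube_split: "(E4q ^ 3) ^ d = (E4q ^ 3) ^ (d - i) * (E4q ^ 3) ^ i"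
    by (metis power_add power_mult)+
  have E6_split: "E6q ^ (c + 2*i) = E6q ^ c * (E6q ^ 2) ^ i"
    by (simp only: power_add power_mult)
  have "E4q ^ 3 * (1 - j_recip) = E6q ^ 2"
    unfolding one_minus_j_recip by (metis E4q_cube_mult_inverse mult.left_commute mult_1_right)
  then have E6_square: "(E6q ^ 2) ^ i = (E4q ^ 3) ^ i * (1 - j_recip) ^ i"
    by (metis power_mult_distrib)
  show ?thesis
    unfolding E4_split E6_split E6_square E4_cube_split by (simp only: mult_ac)
qed

lemma qexp_modular_form_poly_fps:
  assumes "modular_form k f" "4*b' + 6*c' = k"
  defines "B \<equiv> b' + 3 * (c' div 2)" and "c0 \<equiv> c' mod 2"
  shows "qexp f = E4q ^ (B - 3 * (B div 3)) * E6q ^ c0 * (E4q ^ 3) ^ (B div 3) *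
    poly_fps (\<Sum>i\<le>B div 3. monom (coeffPQR f 0 (B - 3*i) (c0 + 2*i)) i) (1 - j_recip)"
proof -
  have "qexp f = (\<Sum>c\<le>k. \<Sum>b\<le>k. fps_const (coeffPQR f 0 b c) * E4q ^ b * E6q ^ c)"
    by (rule qexp_modular_form[OF assms(1)])
  also have "\<dots> = (\<Sum>i\<le>B div 3.
      fps_const (coeffPQR f 0 (B - 3*i) (c0 + 2*i)) * E4q ^ (B - 3*i) * E6q ^ (c0 + 2*i))"
    unfolding B_def c0_def
    by (rule sum_weight_4_6[OF _ assms(2)]) (use assms(1) in \<open>auto simp: modular_form_def\<close>)
  also have "\<dots> = E4q ^ (B - 3 * (B div 3)) * E6q ^ c0 * (E4q ^ 3) ^ (B div 3) *
      (\<Sum>i\<le>B div 3. fps_const (coeffPQR f 0 (B - 3*i) (c0 + 2*i)) * (1 - j_recip) ^ i)"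
    unfolding sum_distrib_left
    by (intro sum.cong refl) (simp add: mult.assoc E4q_E6q_power_factor mult.left_commute)
  finally show ?thesis by (simp add: poly_fps_sum poly_fps_monom)
qed

lemma modular_form_coeff_in_Zp:
  assumes "prime p" "p \<ge> 5" "modular_form k f" "integral_fourier f"
  shows "in_Zp p (coeffPQR f a b c)"
proof (cases "coeffPQR f a b c = 0")
  case False
  then have "a = 0" and k: "4*b + 6*c = k" using assms(3) unfolding modular_form_def by auto
  define B where "B = b + 3 * (c div 2)"
  define c0 where "c0 = c mod 2"
  define h where "h = (\<Sum>i\<le>B div 3. monom (coeffPQR f 0 (B - 3*i) (c0 + 2*i)) i)"
  define W where "W = E4q ^ (B - 3 * (B div 3)) * E6q ^ c0 * (E4q ^ 3) ^ (B div 3)"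
  have "qexp f = W * poly_fps h (1 - j_recip)"
    unfolding W_def h_def B_def c0_def by (rule qexp_modular_form_poly_fps[OF assms(3) k])
  moreover have "fps_in_Zp p (qexp f)"
    using assms(4) unfolding integral_fourier_def fps_in_Zp_def by (auto intro: in_Zp_Ints)
  moreover have "W $ 0 = 1" "fps_in_Zp p W"
    unfolding W_def by (simp_all add: fps_power_zeroth fps_in_Zp_mult fps_in_Zp_power
        fps_in_Zp_E4q fps_in_Zp_E6q)
  ultimately have "fps_in_Zp p (poly_fps h (1 - j_recip))"
    by (metis fps_in_Zp_cancel_unit)
  then have "poly_in_Zp p h"
    by (intro poly_in_Zp_if_poly_fps_one_minus_j_recip_in_Zp[OF assms(1,2)])
  obtain i where "i \<le> B div 3" "b = B - 3*i" "c = c0 + 2*i"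
    using weight_4_6_exponents[of b c b c] unfolding B_def c0_def by blast
  then have "coeff h i = coeffPQR f a b c"
    unfolding h_def coeff_sum coeff_monom using \<open>a = 0\<close> by simp
  with \<open>poly_in_Zp p h\<close> show ?thesis unfolding poly_in_Zp_def by metis
qed simp

section \<open>Reduction of D^(p^2) f modulo p^2\<close>

definition pqr_in_Zp :: "nat \<Rightarrow> pqr \<Rightarrow> bool" where
  "pqr_in_Zp p F \<longleftrightarrow> (\<forall>a b c. in_Zp p (coeffPQR F a b c))"

lemma pqr_in_Zp_Dop:
  assumes "prime p" "p \<ge> 5" "pqr_in_Zp p F"
  shows "pqr_in_Zp p (Dop F)"
proof -
  have in_Zp_fractions: "in_Zp p (1/12)" "in_Zp p (1/3)" "in_Zp p (1/2)"
    using in_Zp_divide_12_power[OF assms(1,2) in_Zp_1, of 1]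
      in_Zp_divide_2_3_powers[OF assms(1,2) in_Zp_1, of 0 1]
      in_Zp_divide_2_3_powers[OF assms(1,2) in_Zp_1, of 1 0] by simp_all
  have cst_mult: "pqr_in_Zp p (cst r * G)" if "in_Zp p r" "pqr_in_Zp p G" for r G
    using that unfolding pqr_in_Zp_def by (simp add: in_Zp_mult)
  have add_diff: "pqr_in_Zp p (G + H)" "pqr_in_Zp p (G - H)"
    if "pqr_in_Zp p G" "pqr_in_Zp p H" for G H
    using that unfolding pqr_in_Zp_def by (simp_all add: in_Zp_add in_Zp_diff)
  have var_mult_deriv: "pqr_in_Zp p (varP * G)" "pqr_in_Zp p (varQ * G)" "pqr_in_Zp p (varR * G)"
    "pqr_in_Zp p (dP G)" "pqr_in_Zp p (dQ G)" "pqr_in_Zp p (dR G)"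
    if "pqr_in_Zp p G" for G
    using that unfolding pqr_in_Zp_def by (simp_all del: of_nat_Suc add: in_Zp_mult)
  show ?thesis
    unfolding Dop_expand by (intro cst_mult add_diff var_mult_deriv assms(3) in_Zp_fractions)
qed

lemma pqr_in_Zp_Dop_funpow:
  "prime p \<Longrightarrow> p \<ge> 5 \<Longrightarrow> pqr_in_Zp p f \<Longrightarrow> pqr_in_Zp p ((Dop ^^ m) f)"
  by (induction m) (simp_all add: pqr_in_Zp_Dop)

lemma in_Zp_coeffPQR_Dop_funpow_Suc_divide:
  assumes "prime p" "p \<ge> 5" "modular_form k f" "pqr_in_Zp p f" "N > 0"
  shows "in_Zp p (coeffPQR ((Dop ^^ N) f) (Suc j) b c / of_nat N)"
proof -
  have "coeffPQR ((Dop ^^ N) f) (Suc j) b c / of_nat N =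
      fact j * of_nat ((N - 1) choose j) * of_nat ((k + N - 1) choose Suc j)
        * coeffPQR ((Dop ^^ (N - Suc j)) f) 0 b c / 12 ^ Suc j"
    using assms(5) coeffPQR_Dop_funpow_Suc[OF modular_form_dP modular_form_isobaric, OF assms(3,3)]
    by simp
  moreover have "in_Zp p (coeffPQR ((Dop ^^ (N - Suc j)) f) 0 b c)"
    using pqr_in_Zp_Dop_funpow[OF assms(1,2,4)] unfolding pqr_in_Zp_def by blast
  then have "in_Zp p (fact j * of_nat ((N - 1) choose j) * of_nat ((k + N - 1) choose Suc j)
      * coeffPQR ((Dop ^^ (N - Suc j)) f) 0 b c)"
    using in_Zp_of_nat[of p "fact j"] by (simp add: in_Zp_mult)
  ultimately show ?thesis by (metis in_Zp_divide_12_power[OF assms(1,2)])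
qed

theorem lemma3p10:
  fixes p k :: nat and f :: pqr
  assumes "prime p" and "p \<ge> 5"
    and "modular_form k f" and "integral_fourier f"
  shows "modform_mod_p2 p ((Dop ^^ (p ^ 2)) f)"
proof -
  have Zp_f: "pqr_in_Zp p f"
    unfolding pqr_in_Zp_def using modular_form_coeff_in_Zp[OF assms] by blast
  have "in_Zp p (coeffPQR ((Dop ^^ (p ^ 2)) f) a b c)" for a b c
    using pqr_in_Zp_Dop_funpow[OF assms(1,2) Zp_f] unfolding pqr_in_Zp_def by blast
  moreover have "in_Zp p (coeffPQR ((Dop ^^ (p ^ 2)) f) a b c / of_nat (p ^ 2))"
    if "a > 0" for a b c
    using that in_Zp_coeffPQR_Dop_funpow_Suc_divide[OF assms(1-3) Zp_f, of "p ^ 2"]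
      prime_gt_0_nat[OF assms(1)] by (metis gr0_implies_Suc zero_less_power)
  ultimately show ?thesis unfolding modform_mod_p2_def by blast
qed

end
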